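(* Let $T$ be a skew truss and $P$ a paragon in $T$. Then $P$ is completely prime if and only if there exists $p\in P$ such that, for all $a,d\in T$, $$[ad,ap,p]\in P\implies P_p^a\text{ is an ideal or } d\in P,$$ and $$[da,pa,p]\in P\implies P_p^a\text{ is an ideal or } d\in P.$$
   Context: A heap is a set with a ternary operation $[-,-,-]$ satisfying $[a_1,a_2,[a_3,a_4,a_5]]=[[a_1,a_2,a_3],a_4,a_5]$ and $[a,a,b]=b=[b,a,a]$. A skew truss is a heap with an associative multiplication satisfying $a[b,c,d]=[ab,ac,ad]$ and $[b,c,d]a=[ba,ca,da]$. A normal sub-heap is a non-empty subset $S$ closed under $[-,-,-]$ with $[[a,e,s],a,e]\in S$ for all $a$ and $e,s\in S$; $a\sim_S b$ iff $[a,b,s]\in S$ for some (equivalently all) $s\in S$. A sub-heap $S$ is closed if $[ts',ts,s]\in S$ and $[s't,st,s]\in S$ for all $s,s'\in S$, $t$. A paragon is a non-empty normal sub-heap $P$ all of whose $\sim_P$-classes are closed. An ideal is a normal sub-heap $I$ with $ti,it\in I$ for all $t\in T$, $i\in I$. For $p\in P$, $a\in T$, $P_p^a=\{[q,p,a]\mid q\in P\}$. A paragon $P$ is completely prime if for all $p\in P$ and $a,b,c\in T$: $[ab,ac,p]\in P$ implies that $P_p^a$ is an ideal or $[b,c,p]\in P$; and $[ba,ca,p]\in P$ implies that $P_p^a$ is an ideal or $[b,c,p]\in P$. *)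

theory Defs
  imports Main
begin

text \<open>The skew truss T is modelled as the whole type 'a, with ternary heap operation br
  and multiplication mul.\<close>

definition heap :: "('a \<Rightarrow> 'a \<Rightarrow> 'a \<Rightarrow> 'a) \<Rightarrow> bool" where
  "heap br \<longleftrightarrow>
     (\<forall>a1 a2 a3 a4 a5. br a1 a2 (br a3 a4 a5) = br (br a1 a2 a3) a4 a5) \<and>
     (\<forall>a b. br a a b = b \<and> br b a a = b)"

definition skew_truss :: "('a \<Rightarrow> 'a \<Rightarrow> 'a \<Rightarrow> 'a) \<Rightarrow> ('a \<Rightarrow> 'a \<Rightarrow> 'a) \<Rightarrow> bool" where
  "skew_truss br mul \<longleftrightarrow> heap br \<and>
     (\<forall>a b c. mul (mul a b) c = mul a (mul b c)) \<and>
     (\<forall>a b c d. mul a (br b c d) = br (mul a b) (mul a c) (mul a d)) \<and>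
     (\<forall>a b c d. mul (br b c d) a = br (mul b a) (mul c a) (mul d a))"

definition normal_subheap :: "('a \<Rightarrow> 'a \<Rightarrow> 'a \<Rightarrow> 'a) \<Rightarrow> 'a set \<Rightarrow> bool" where
  "normal_subheap br S \<longleftrightarrow> S \<noteq> {} \<and>
     (\<forall>x\<in>S. \<forall>y\<in>S. \<forall>z\<in>S. br x y z \<in> S) \<and>
     (\<forall>a. \<forall>e\<in>S. \<forall>s\<in>S. br (br a e s) a e \<in> S)"

definition heap_sim :: "('a \<Rightarrow> 'a \<Rightarrow> 'a \<Rightarrow> 'a) \<Rightarrow> 'a set \<Rightarrow> 'a \<Rightarrow> 'a \<Rightarrow> bool" where
  "heap_sim br S a b \<longleftrightarrow> (\<exists>s\<in>S. br a b s \<in> S)"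

definition sim_class :: "('a \<Rightarrow> 'a \<Rightarrow> 'a \<Rightarrow> 'a) \<Rightarrow> 'a set \<Rightarrow> 'a \<Rightarrow> 'a set" where
  "sim_class br S a = {b. heap_sim br S a b}"

definition closed_subheap :: "('a \<Rightarrow> 'a \<Rightarrow> 'a \<Rightarrow> 'a) \<Rightarrow> ('a \<Rightarrow> 'a \<Rightarrow> 'a) \<Rightarrow> 'a set \<Rightarrow> bool" where
  "closed_subheap br mul S \<longleftrightarrow>
     (\<forall>s\<in>S. \<forall>s'\<in>S. \<forall>t. br (mul t s') (mul t s) s \<in> S \<and> br (mul s' t) (mul s t) s \<in> S)"

definition paragon :: "('a \<Rightarrow> 'a \<Rightarrow> 'a \<Rightarrow> 'a) \<Rightarrow> ('a \<Rightarrow> 'a \<Rightarrow> 'a) \<Rightarrow> 'a set \<Rightarrow> bool" where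
  "paragon br mul P \<longleftrightarrow> P \<noteq> {} \<and> normal_subheap br P \<and>
     (\<forall>a. closed_subheap br mul (sim_class br P a))"

definition truss_ideal :: "('a \<Rightarrow> 'a \<Rightarrow> 'a \<Rightarrow> 'a) \<Rightarrow> ('a \<Rightarrow> 'a \<Rightarrow> 'a) \<Rightarrow> 'a set \<Rightarrow> bool" where
  "truss_ideal br mul I \<longleftrightarrow> normal_subheap br I \<and>
     (\<forall>t. \<forall>i\<in>I. mul t i \<in> I \<and> mul i t \<in> I)"

definition shifted :: "('a \<Rightarrow> 'a \<Rightarrow> 'a \<Rightarrow> 'a) \<Rightarrow> 'a set \<Rightarrow> 'a \<Rightarrow> 'a \<Rightarrow> 'a set" where
  "shifted br P p a = {br q p a | q. q \<in> P}"

definition completely_prime :: "('a \<Rightarrow> 'a \<Rightarrow> 'a \<Rightarrow> 'a) \<Rightarrow> ('a \<Rightarrow> 'a \<Rightarrow> 'a) \<Rightarrow> 'a set \<Rightarrow> bool" where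
  "completely_prime br mul P \<longleftrightarrow> paragon br mul P \<and>
     (\<forall>p\<in>P. \<forall>a b c.
        (br (mul a b) (mul a c) p \<in> P \<longrightarrow> truss_ideal br mul (shifted br P p a) \<or> br b c p \<in> P) \<and>
        (br (mul b a) (mul c a) p \<in> P \<longrightarrow> truss_ideal br mul (shifted br P p a) \<or> br b c p \<in> P))"

end

theory Submission
  imports Defs
begin

text \<open>Membership of \<open>[x, y, p]\<close> in a sub-heap \<open>P\<close> and the set \<open>P\<^sub>p\<^sup>a\<close> do not depend on the
  choice of \<open>p \<in> P\<close>, so the defining condition of complete primeness holds at every point of \<open>P\<close>
  once it holds at one. At a fixed \<open>p\<close>, the substitution \<open>d = [b, c, p]\<close> turns the condition in
  \<open>b, c\<close> into the condition in \<open>d\<close> alone, because distributivity gives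
  \<open>[ad, ap, p] = [ab, ac, p]\<close> and \<open>[da, pa, p] = [ba, ca, p]\<close>.\<close>

lemma heap_br_assoc: "heap br \<Longrightarrow> br a1 a2 (br a3 a4 a5) = br (br a1 a2 a3) a4 a5"
  unfolding heap_def by blast

lemma heap_br_left_cancel: "heap br \<Longrightarrow> br a a b = b"
  unfolding heap_def by blast

lemma heap_br_right_cancel: "heap br \<Longrightarrow> br b a a = b"
  unfolding heap_def by blast

lemma heap_br_br_cancel: "heap br \<Longrightarrow> br (br x y z) z w = br x y w"
  by (metis heap_br_assoc heap_br_left_cancel)

lemma normal_subheap_br_closed:
  "normal_subheap br P \<Longrightarrow> x \<in> P \<Longrightarrow> y \<in> P \<Longrightarrow> z \<in> P \<Longrightarrow> br x y z \<in> P"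
  unfolding normal_subheap_def by blast

lemma normal_subheap_br_base_change:
  assumes "heap br" "normal_subheap br P" "p \<in> P" "p' \<in> P" "br x y p \<in> P"
  shows "br x y p' \<in> P"
  using normal_subheap_br_closed[OF assms(2) assms(5,3,4)] heap_br_br_cancel[OF assms(1)] by simp

lemma shifted_subset:
  assumes h: "heap br" and N: "normal_subheap br P" and "p \<in> P" "p' \<in> P"
  shows "shifted br P p' a \<subseteq> shifted br P p a"
proof
  fix x assume "x \<in> shifted br P p' a"
  then obtain q where "q \<in> P" and x: "x = br q p' a" unfolding shifted_def by blast
  then have "br q p' p \<in> P" using normal_subheap_br_closed[OF N] assms(3,4) by blast
  moreover have "x = br (br q p' p) p a" using x heap_br_br_cancel[OF h] by simp
  ultimately show "x \<in> shifted br P p a" unfolding shifted_def by blast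
qed

lemma shifted_base_change:
  "heap br \<Longrightarrow> normal_subheap br P \<Longrightarrow> p \<in> P \<Longrightarrow> p' \<in> P \<Longrightarrow>
    shifted br P p' a = shifted br P p a"
  using shifted_subset by (metis subset_antisym)

definition prime_at :: "('a \<Rightarrow> 'a \<Rightarrow> 'a \<Rightarrow> 'a) \<Rightarrow> ('a \<Rightarrow> 'a \<Rightarrow> 'a) \<Rightarrow> 'a set \<Rightarrow> 'a \<Rightarrow> bool" where
  "prime_at br mul P p \<longleftrightarrow> (\<forall>a b c.
     (br (mul a b) (mul a c) p \<in> P \<longrightarrow> truss_ideal br mul (shifted br P p a) \<or> br b c p \<in> P) \<and>
     (br (mul b a) (mul c a) p \<in> P \<longrightarrow> truss_ideal br mul (shifted br P p a) \<or> br b c p \<in> P))"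

lemma completely_prime_iff_prime_at:
  "completely_prime br mul P \<longleftrightarrow> paragon br mul P \<and> (\<forall>p\<in>P. prime_at br mul P p)"
  unfolding completely_prime_def prime_at_def ..

lemma prime_at_base_change:
  assumes h: "heap br" and N: "normal_subheap br P" and p: "p \<in> P" and p': "p' \<in> P"
    and "prime_at br mul P p"
  shows "prime_at br mul P p'"
proof -
  have "br x y p \<in> P \<longleftrightarrow> br x y p' \<in> P" for x y
    using normal_subheap_br_base_change[OF h N] p p' by blast
  moreover have "shifted br P p' a = shifted br P p a" for a
    using shifted_base_change[OF h N p p'] .
  ultimately show ?thesis using \<open>prime_at br mul P p\<close> unfolding prime_at_def by simp
qed

lemma skew_truss_heap: "skew_truss br mul \<Longrightarrow> heap br"
  unfolding skew_truss_def by blast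

lemma skew_truss_left_distrib:
  "skew_truss br mul \<Longrightarrow> mul a (br b c d) = br (mul a b) (mul a c) (mul a d)"
  unfolding skew_truss_def by blast

lemma skew_truss_right_distrib:
  "skew_truss br mul \<Longrightarrow> mul (br b c d) a = br (mul b a) (mul c a) (mul d a)"
  unfolding skew_truss_def by blast

lemma skew_truss_br_mul_left:
  "skew_truss br mul \<Longrightarrow> br (mul a (br b c p)) (mul a p) p = br (mul a b) (mul a c) p"
  by (simp add: skew_truss_left_distrib heap_br_br_cancel skew_truss_heap)

lemma skew_truss_br_mul_right:
  "skew_truss br mul \<Longrightarrow> br (mul (br b c p) a) (mul p a) p = br (mul b a) (mul c a) p"
  by (simp add: skew_truss_right_distrib heap_br_br_cancel skew_truss_heap)

lemma prime_at_iff_single_variable: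
  assumes T: "skew_truss br mul"
  shows "prime_at br mul P p \<longleftrightarrow> (\<forall>a d.
     (br (mul a d) (mul a p) p \<in> P \<longrightarrow> truss_ideal br mul (shifted br P p a) \<or> d \<in> P) \<and>
     (br (mul d a) (mul p a) p \<in> P \<longrightarrow> truss_ideal br mul (shifted br P p a) \<or> d \<in> P))"
    (is "_ \<longleftrightarrow> (\<forall>a d. ?R a d)")
proof
  assume prime: "prime_at br mul P p"
  show "\<forall>a d. ?R a d"
  proof (intro allI)
    fix a d
    have "br d p p = d"
      using heap_br_right_cancel[OF skew_truss_heap[OF T]] .
    then show "?R a d"
      using prime[unfolded prime_at_def, rule_format, of a d p] by simp
  qed
next
  assume "\<forall>a d. ?R a d"
  then have "?R a (br b c p)" for a b c by blast
  then show "prime_at br mul P p"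
    unfolding prime_at_def skew_truss_br_mul_left[OF T] skew_truss_br_mul_right[OF T] by simp
qed

theorem lemma4p8:
  fixes br :: "'a \<Rightarrow> 'a \<Rightarrow> 'a \<Rightarrow> 'a" and mul :: "'a \<Rightarrow> 'a \<Rightarrow> 'a" and P :: "'a set"
  assumes "skew_truss br mul"
    and "paragon br mul P"
  shows "completely_prime br mul P \<longleftrightarrow>
    (\<exists>p\<in>P. \<forall>a d.
       (br (mul a d) (mul a p) p \<in> P \<longrightarrow> truss_ideal br mul (shifted br P p a) \<or> d \<in> P) \<and>
       (br (mul d a) (mul p a) p \<in> P \<longrightarrow> truss_ideal br mul (shifted br P p a) \<or> d \<in> P))"
proof -
  have h: "heap br" using skew_truss_heap[OF assms(1)] .
  have N: "normal_subheap br P" and "P \<noteq> {}" using assms(2) by (simp_all add: paragon_def)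
  then obtain p0 where "p0 \<in> P" by blast
  have "completely_prime br mul P \<longleftrightarrow> (\<forall>p\<in>P. prime_at br mul P p)"
    using assms(2) by (simp add: completely_prime_iff_prime_at)
  also have "\<dots> \<longleftrightarrow> (\<exists>p\<in>P. prime_at br mul P p)"
    using prime_at_base_change[OF h N] \<open>p0 \<in> P\<close> by metis
  finally show ?thesis
    unfolding prime_at_iff_single_variable[OF assms(1)] .
qed

end
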